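(* Let $q\geq 2$ be an integer and fix a real number $c_0>0$. For every real number $b>0$ there exists a positive integer $n_0$ such that for every integer $n\geq n_0$ and every integer $k$ of the form $k=\frac{n(q-1)}{2q}\bigl(\log(n(q-1))-c\bigr)$ with $0\leq c\leq \min\{c_0,\log(n(q-1))\}$, we have $$\Vert \nu_n^{*k}-\pi_n\Vert_{TV}\geq 1-(4q+b)e^{-c}.$$
   Context: For integers $n\geq1$, $q\geq2$, the Hamming scheme $H(n,q)$ is the graph with vertex set $X_n=\{0,1,\dots,q-1\}^n$ in which $x$ and $x'$ are adjacent ($x\sim x'$) iff they differ in exactly one coordinate. The simple random walk has transition probability $p_n(x,x')=\frac{1}{n(q-1)}$ if $x\sim x'$ and $0$ otherwise. Let $p_n^{(k)}$ denote the $k$-step transition probability ($p_n^{(0)}(x,x')=\delta_{x,x'}$), $x^{(0)}=(0,\dots,0)$, and $\nu_n^{*k}(x)=p_n^{(k)}(x^{(0)},x)$. $\pi_n$ is the uniform probability measure on $X_n$. For measures $\mu,\nu$ on $X_n$, $\Vert\mu-\nu\Vert_{TV}=\max_{S\subset X_n}|\mu(S)-\nu(S)|$. *)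

theory Defs
  imports "HOL-Analysis.Analysis"
begin

definition ham_X :: "nat \<Rightarrow> nat \<Rightarrow> (nat \<Rightarrow> nat) set" where
  "ham_X n q = PiE {..<n} (\<lambda>_. {..<q})"

definition ham_adj :: "nat \<Rightarrow> (nat \<Rightarrow> nat) \<Rightarrow> (nat \<Rightarrow> nat) \<Rightarrow> bool" where
  "ham_adj n x x' \<longleftrightarrow> card {i \<in> {..<n}. x i \<noteq> x' i} = 1"

definition ham_p :: "nat \<Rightarrow> nat \<Rightarrow> (nat \<Rightarrow> nat) \<Rightarrow> (nat \<Rightarrow> nat) \<Rightarrow> real" where
  "ham_p n q x x' = (if ham_adj n x x' then 1 / (real n * (real q - 1)) else 0)"

fun ham_pk :: "nat \<Rightarrow> nat \<Rightarrow> nat \<Rightarrow> (nat \<Rightarrow> nat) \<Rightarrow> (nat \<Rightarrow> nat) \<Rightarrow> real" where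
  "ham_pk n q 0 x x' = (if x = x' then 1 else 0)"
| "ham_pk n q (Suc k) x x' = (\<Sum>y\<in>ham_X n q. ham_pk n q k x y * ham_p n q y x')"

definition ham_x0 :: "nat \<Rightarrow> nat \<Rightarrow> nat" where
  "ham_x0 n = (\<lambda>i\<in>{..<n}. 0)"

definition ham_nu :: "nat \<Rightarrow> nat \<Rightarrow> nat \<Rightarrow> (nat \<Rightarrow> nat) \<Rightarrow> real" where
  "ham_nu n q k x = ham_pk n q k (ham_x0 n) x"

definition ham_pi :: "nat \<Rightarrow> nat \<Rightarrow> (nat \<Rightarrow> nat) \<Rightarrow> real" where
  "ham_pi n q x = 1 / real (card (ham_X n q))"

definition tv_dist :: "'a set \<Rightarrow> ('a \<Rightarrow> real) \<Rightarrow> ('a \<Rightarrow> real) \<Rightarrow> real" where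
  "tv_dist X mu nu = Max ((\<lambda>S. \<bar>(\<Sum>x\<in>S. mu x) - (\<Sum>x\<in>S. nu x)\<bar>) ` Pow X)"

end

theory Submission
  imports Defs
begin

text \<open>
  Wilson's method. Let W be the number of zero coordinates minus its mean n/q under the
  uniform distribution, and N = n(q-1). Since the number of zeros performs a birth-death
  chain, W is an eigenfunction of the walk with eigenvalue 1 - q/N, and W^2 obeys an affine
  recursion. Hence after k steps W has mean (1 - q/N)^k N/q and variance at most N/(2q),
  whereas under the uniform distribution it has mean 0 and variance N/q^2. Chebyshev's
  inequality on the set where W exceeds half the former mean separates the two measures:
  the distance is at least 1 - 2(q+2)/(N (1 - q/N)^(2k)), and for k = N/(2q) (log N - c)
  the denominator is e^c up to a factor exp(2q log N / N) tending to 1.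
\<close>

lemma tv_dist_ge_second_moment:
  fixes X :: "'a set" and \<mu> \<pi> f :: "'a \<Rightarrow> real"
  assumes X: "finite X" and \<mu>: "\<And>x. x \<in> X \<Longrightarrow> 0 \<le> \<mu> x" "sum \<mu> X = 1"
    and \<pi>: "\<And>x. x \<in> X \<Longrightarrow> 0 \<le> \<pi> x" and w: "0 < w"
  shows "1 - 4 * ((\<Sum>x\<in>X. \<mu> x * (f x - w)\<^sup>2) + (\<Sum>x\<in>X. \<pi> x * (f x)\<^sup>2)) / w\<^sup>2 \<le> tv_dist X \<mu> \<pi>"
proof -
  define S where "S = {x \<in> X. w / 2 \<le> f x}"
  have S: "S \<subseteq> X" "finite S" using X unfolding S_def by auto
  have "sum \<mu> (X - S) \<le> (\<Sum>x\<in>X - S. \<mu> x * (4 * (f x - w)\<^sup>2 / w\<^sup>2))"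
  proof (rule sum_mono)
    fix x assume x: "x \<in> X - S"
    then have "(w / 2)\<^sup>2 \<le> (w - f x)\<^sup>2"
      using w unfolding S_def by (intro power_mono) auto
    then have "(w / 2)\<^sup>2 \<le> (f x - w)\<^sup>2"
      by (simp add: power2_commute)
    then have "1 \<le> 4 * (f x - w)\<^sup>2 / w\<^sup>2"
      using w by (simp add: field_simps power2_eq_square)
    from mult_left_mono[OF this \<mu>(1)] x
    show "\<mu> x \<le> \<mu> x * (4 * (f x - w)\<^sup>2 / w\<^sup>2)" by simp
  qed
  also have "\<dots> \<le> (\<Sum>x\<in>X. \<mu> x * (4 * (f x - w)\<^sup>2 / w\<^sup>2))"
    using X \<mu>(1) by (intro sum_mono2) auto
  finally have \<mu>S: "1 - 4 * (\<Sum>x\<in>X. \<mu> x * (f x - w)\<^sup>2) / w\<^sup>2 \<le> sum \<mu> S"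
    using sum.subset_diff[OF S(1) X, of \<mu>] \<mu>(2)
    by (simp add: sum_distrib_left sum_divide_distrib mult.left_commute)
  have "sum \<pi> S \<le> (\<Sum>x\<in>S. \<pi> x * (4 * (f x)\<^sup>2 / w\<^sup>2))"
  proof (rule sum_mono)
    fix x assume x: "x \<in> S"
    then have "(w / 2)\<^sup>2 \<le> (f x)\<^sup>2"
      using w unfolding S_def by (intro power_mono) auto
    then have "1 \<le> 4 * (f x)\<^sup>2 / w\<^sup>2"
      using w by (simp add: field_simps power2_eq_square)
    from mult_left_mono[OF this \<pi>] x S(1)
    show "\<pi> x \<le> \<pi> x * (4 * (f x)\<^sup>2 / w\<^sup>2)" by auto
  qed
  also have "\<dots> \<le> (\<Sum>x\<in>X. \<pi> x * (4 * (f x)\<^sup>2 / w\<^sup>2))"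
    using X S \<pi> by (intro sum_mono2) auto
  finally have \<pi>S: "sum \<pi> S \<le> 4 * (\<Sum>x\<in>X. \<pi> x * (f x)\<^sup>2) / w\<^sup>2"
    by (simp add: sum_distrib_left sum_divide_distrib mult.left_commute)
  have "\<bar>sum \<mu> S - sum \<pi> S\<bar> \<le> tv_dist X \<mu> \<pi>"
    unfolding tv_dist_def using X S(1) by (intro Max_ge) auto
  with \<mu>S \<pi>S show ?thesis by (simp add: add_divide_distrib)
qed

lemma sum_if_eq_count:
  fixes A B :: real
  shows "(\<Sum>i\<in>I. if P i then A else B) = (\<Sum>i\<in>I. of_bool (P i)) * A + (real (card I) - (\<Sum>i\<in>I. of_bool (P i))) * B"
proof -
  have "(\<Sum>i\<in>I. if P i then A else B) = (\<Sum>i\<in>I. of_bool (P i) * A + (1 - of_bool (P i)) * B)"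
    by (rule sum.cong) auto
  then show ?thesis
    by (simp add: sum.distrib sum_distrib_right sum_subtractf left_diff_distrib)
qed

lemma sum_lessThan_remove_indicator:
  fixes g :: "bool \<Rightarrow> real"
  assumes "u < q"
  shows "(\<Sum>v\<in>{..<q} - {u}. g (v = 0)) =
    (if u = 0 then (real q - 1) * g False else g True + (real q - 2) * g False)"
proof (cases "u = 0")
  case True
  then show ?thesis using assms by (simp add: of_nat_diff)
next
  case False
  then have "0 \<in> {..<q} - {u}" "2 \<le> q" using assms by auto
  then have "(\<Sum>v\<in>{..<q} - {u}. g (v = 0)) = g True + (\<Sum>v\<in>{..<q} - {u} - {0}. g (v = 0))"
    using sum.remove[of "{..<q} - {u}" 0 "\<lambda>v. g (v = 0)"] by simp
  also have "(\<Sum>v\<in>{..<q} - {u} - {0}. g (v = 0)) = real (card ({..<q} - {u} - {0})) * g False"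
    by simp
  also have "card ({..<q} - {u} - {0}) = q - 2"
    using assms False by (simp add: card_Diff_singleton)
  finally show ?thesis using False \<open>2 \<le> q\<close> by (simp add: of_nat_diff)
qed

lemma exp_le_mult_one_minus_power:
  fixes x c M :: real
  assumes x: "0 \<le> x" "x \<le> 1 / 2" and m: "real m * x = ln M - c"
    and c: "0 \<le> c" "c \<le> ln M" and M: "0 < M"
  shows "exp (c - 2 * x * ln M) \<le> M * (1 - x) ^ m"
proof -
  have "c - 2 * x * ln M - ln M \<le> - (ln M - c) * (1 + 2 * x)"
    using x c mult_left_mono[of "ln M - c" "ln M" "2 * x"] by (simp add: algebra_simps)
  also have "\<dots> = - real m * x - 2 * x * (real m * x)"
    unfolding m[symmetric] by (simp add: algebra_simps)
  also have "\<dots> \<le> real m * ln (1 - x)"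
    using mult_left_mono[OF ln_one_minus_pos_lower_bound[OF x], of "real m"]
    by (simp add: algebra_simps power2_eq_square)
  finally have "exp (c - 2 * x * ln M - ln M) \<le> exp (real m * ln (1 - x))"
    by simp
  also have "exp (real m * ln (1 - x)) = (1 - x) ^ m"
    using x by (simp add: exp_of_nat_mult)
  also have "exp (c - 2 * x * ln M - ln M) = exp (c - 2 * x * ln M) / M"
    using M by (simp add: exp_diff)
  finally show ?thesis
    using M by (simp add: pos_divide_le_eq mult.commute)
qed

lemma eventually_ln_over_linear_le:
  fixes a C e :: real
  assumes "0 < a" "0 < e"
  shows "eventually (\<lambda>n. C * ln (real n * a) / (real n * a) \<le> e) sequentially"
proof -
  have "filterlim (\<lambda>n. real n * a) at_top sequentially"
    by (rule filterlim_at_top_mult_tendsto_pos[OF tendsto_const assms(1) filterlim_real_sequentially])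
  from tendsto_mult_right_zero[OF filterlim_compose[OF ln_x_over_x_tendsto_0 this], of C]
  have "((\<lambda>n. C * ln (real n * a) / (real n * a)) \<longlongrightarrow> 0) sequentially"
    by simp
  from order_tendstoD(2)[OF this assms(2)] show ?thesis
    by (rule eventually_mono) simp
qed

lemma finite_ham_X: "finite (ham_X n q)"
  unfolding ham_X_def by (simp add: finite_PiE)

lemma ham_x0_in_X: "0 < q \<Longrightarrow> ham_x0 n \<in> ham_X n q"
  unfolding ham_X_def ham_x0_def by auto

lemma ham_update_in_X: "y \<in> ham_X n q \<Longrightarrow> m < n \<Longrightarrow> v < q \<Longrightarrow> y(m := v) \<in> ham_X n q"
  unfolding ham_X_def by (auto simp: PiE_iff extensional_def)

lemma ham_adj_sym: "ham_adj n x y = ham_adj n y x"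
  unfolding ham_adj_def by (simp add: eq_commute[of "x _"])

lemma ham_p_sym: "ham_p n q x y = ham_p n q y x"
  unfolding ham_p_def by (simp add: ham_adj_sym)

lemma ham_adj_iff_update:
  assumes "x \<in> ham_X n q" "y \<in> ham_X n q"
  shows "ham_adj n y x \<longleftrightarrow> (\<exists>m<n. \<exists>v. v \<noteq> y m \<and> x = y(m := v))"
proof
  assume "ham_adj n y x"
  then obtain m where m: "{i \<in> {..<n}. y i \<noteq> x i} = {m}"
    unfolding ham_adj_def by (rule card_1_singletonE)
  have "x i = y i" if "i \<noteq> m" for i
  proof (cases "i < n")
    case True
    moreover have "i \<notin> {i \<in> {..<n}. y i \<noteq> x i}" using m that by simp
    ultimately show ?thesis by simp
  next
    case False
    then show ?thesis
      using PiE_arb[OF assms(1)[unfolded ham_X_def]] PiE_arb[OF assms(2)[unfolded ham_X_def]]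
      by simp
  qed
  then have "x = y(m := x m)" by (simp add: fun_eq_iff)
  moreover have "m < n" "x m \<noteq> y m"
    using m by (simp_all add: set_eq_iff) (metis (mono_tags, lifting) lessThan_iff)+
  ultimately show "\<exists>m<n. \<exists>v. v \<noteq> y m \<and> x = y(m := v)" by auto
next
  assume "\<exists>m<n. \<exists>v. v \<noteq> y m \<and> x = y(m := v)"
  then obtain m v where "m < n" "v \<noteq> y m" "x = y(m := v)" by blast
  then have "{i \<in> {..<n}. y i \<noteq> x i} = {m}" by auto
  then show "ham_adj n y x" unfolding ham_adj_def by simp
qed

lemma bij_betw_ham_neighbours:
  assumes y: "y \<in> ham_X n q"
  shows "bij_betw (\<lambda>(m, v). y(m := v)) (SIGMA m:{..<n}. {..<q} - {y m})
           {x \<in> ham_X n q. ham_adj n y x}"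
proof (rule bij_betw_imageI)
  have "(m, v) = (m', v')" if "y(m := v) = y(m' := v')" "v \<noteq> y m" for m v m' v'
    using that by (metis fun_upd_apply)
  then show "inj_on (\<lambda>(m, v). y(m := v)) (SIGMA m:{..<n}. {..<q} - {y m})"
    by (auto intro!: inj_onI)
  have "x \<in> {x \<in> ham_X n q. ham_adj n y x} \<longleftrightarrow>
        (\<exists>m<n. \<exists>v<q. v \<noteq> y m \<and> x = y(m := v))" for x
    using ham_adj_iff_update[OF _ y] ham_update_in_X[OF y]
    by (metis (no_types, lifting) fun_upd_same mem_Collect_eq ham_X_def PiE_mem lessThan_iff)
  then show "(\<lambda>(m, v). y(m := v)) ` (SIGMA m:{..<n}. {..<q} - {y m}) = {x \<in> ham_X n q. ham_adj n y x}"
    by (auto simp: image_iff Bex_def)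
qed

definition ham_step :: "nat \<Rightarrow> nat \<Rightarrow> ((nat \<Rightarrow> nat) \<Rightarrow> real) \<Rightarrow> (nat \<Rightarrow> nat) \<Rightarrow> real" where
  "ham_step n q h y = (\<Sum>x\<in>ham_X n q. ham_p n q y x * h x)"

lemma ham_step_eq_neighbour_sum:
  assumes y: "y \<in> ham_X n q"
  shows "ham_step n q h y =
    (\<Sum>m<n. \<Sum>v\<in>{..<q} - {y m}. h (y(m := v))) / (real n * (real q - 1))"
proof -
  have "ham_step n q h y = (\<Sum>x\<in>ham_X n q. (if ham_adj n y x then h x else 0) / (real n * (real q - 1)))"
    unfolding ham_step_def ham_p_def by (rule sum.cong) auto
  also have "\<dots> = (\<Sum>x\<in>{x \<in> ham_X n q. ham_adj n y x}. h x) / (real n * (real q - 1))"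
    by (simp only: sum_divide_distrib sum.inter_filter[OF finite_ham_X])
  also have "(\<Sum>x\<in>{x \<in> ham_X n q. ham_adj n y x}. h x) = (\<Sum>(m, v)\<in>(SIGMA m:{..<n}. {..<q} - {y m}). h (y(m := v)))"
    using sum.reindex_bij_betw[OF bij_betw_ham_neighbours[OF y], of h]
    by (simp add: case_prod_unfold)
  also have "\<dots> = (\<Sum>m<n. \<Sum>v\<in>{..<q} - {y m}. h (y(m := v)))"
    by (simp add: sum.Sigma)
  finally show ?thesis .
qed

definition ham_zeros :: "nat \<Rightarrow> (nat \<Rightarrow> nat) \<Rightarrow> real" where
  "ham_zeros n x = (\<Sum>i<n. of_bool (x i = 0))"

lemma ham_zeros_update:
  assumes "m < n"
  shows "ham_zeros n (y(m := v)) = ham_zeros n y - of_bool (y m = 0) + of_bool (v = 0)"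
proof -
  have m: "finite {..<n}" "m \<in> {..<n}" using assms by auto
  have "ham_zeros n (y(m := v)) = of_bool (v = 0) + (\<Sum>i\<in>{..<n} - {m}. of_bool ((y(m := v)) i = 0))"
    unfolding ham_zeros_def by (subst sum.remove[OF m]) simp
  also have "(\<Sum>i\<in>{..<n} - {m}. of_bool ((y(m := v)) i = 0)) = (\<Sum>i\<in>{..<n} - {m}. of_bool (y i = 0) :: real)"
    by (rule sum.cong) auto
  moreover have "ham_zeros n y = of_bool (y m = 0) + (\<Sum>i\<in>{..<n} - {m}. of_bool (y i = 0))"
    unfolding ham_zeros_def by (subst sum.remove[OF m]) simp
  ultimately show ?thesis by simp
qed

text \<open>The number of zero coordinates of the walk is itself a birth-death chain.\<close>
lemma ham_step_comp_zeros:
  assumes y: "y \<in> ham_X n q" and z: "ham_zeros n y = z" and h: "\<And>x. h x = F (ham_zeros n x)"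
  shows "ham_step n q h y =
    (z * (real q - 1) * F (z - 1) + (real n - z) * ((real q - 2) * F z + F (z + 1)))
      / (real n * (real q - 1))"
proof -
  have "(\<Sum>v\<in>{..<q} - {y m}. h (y(m := v))) =
        (if y m = 0 then (real q - 1) * F (z - 1) else (real q - 2) * F z + F (z + 1))"
    if "m < n" for m
    using sum_lessThan_remove_indicator[of "y m" q "\<lambda>b. F (z - of_bool (y m = 0) + of_bool b)"]
      y that z ham_zeros_update[OF that] h
    by (auto simp: ham_X_def PiE_iff)
  then have "(\<Sum>m<n. \<Sum>v\<in>{..<q} - {y m}. h (y(m := v))) =
        (\<Sum>m<n. if y m = 0 then (real q - 1) * F (z - 1) else (real q - 2) * F z + F (z + 1))"
    by simp
  also have "\<dots> = z * ((real q - 1) * F (z - 1)) + (real n - z) * ((real q - 2) * F z + F (z + 1))"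
    unfolding sum_if_eq_count z[symmetric] ham_zeros_def by simp
  finally show ?thesis
    unfolding ham_step_eq_neighbour_sum[OF y] by (simp add: mult.assoc)
qed

definition ham_zeros_centered :: "nat \<Rightarrow> nat \<Rightarrow> (nat \<Rightarrow> nat) \<Rightarrow> real" where
  "ham_zeros_centered n q x = ham_zeros n x - real n / real q"

lemma ham_step_const:
  assumes "y \<in> ham_X n q" "0 < n" "2 \<le> q"
  shows "ham_step n q (\<lambda>_. c) y = c"
proof -
  have "ham_step n q (\<lambda>_. c) y =
    (ham_zeros n y * (real q - 1) * c + (real n - ham_zeros n y) * ((real q - 2) * c + c))
      / (real n * (real q - 1))"
    by (rule ham_step_comp_zeros[OF assms(1) refl]) simp
  also have "\<dots> = c"
    using assms(2,3) by (simp add: field_simps)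
  finally show ?thesis .
qed

lemma ham_step_zeros_centered:
  assumes "y \<in> ham_X n q" "0 < n" "2 \<le> q"
  shows "ham_step n q (ham_zeros_centered n q) y =
    (1 - real q / (real n * (real q - 1))) * ham_zeros_centered n q y"
proof -
  define z where "z = ham_zeros n y"
  have "ham_step n q (ham_zeros_centered n q) y =
    (z * (real q - 1) * (z - 1 - real n / real q)
      + (real n - z) * ((real q - 2) * (z - real n / real q) + (z + 1 - real n / real q)))
      / (real n * (real q - 1))"
    by (rule ham_step_comp_zeros[OF assms(1) z_def[symmetric]]) (simp add: ham_zeros_centered_def)
  also have "\<dots> = (1 - real q / (real n * (real q - 1))) * (z - real n / real q)"
    using assms(2,3) by (simp add: field_simps)
  finally show ?thesis unfolding ham_zeros_centered_def z_def .
qed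

lemma ham_step_zeros_centered_sq:
  assumes "y \<in> ham_X n q" "0 < n" "2 \<le> q"
  shows "ham_step n q (\<lambda>x. (ham_zeros_centered n q x)\<^sup>2) y =
    (1 - 2 * real q / (real n * (real q - 1))) * (ham_zeros_centered n q y)\<^sup>2
    + (real q - 2) / (real n * (real q - 1)) * ham_zeros_centered n q y + 2 / real q"
proof -
  define a where "a = real n / real q"
  define w where "w = ham_zeros_centered n q y"
  have n: "real n = real q * a" using assms(3) unfolding a_def by simp
  define F where "F z = (z - a)\<^sup>2" for z
  have "ham_step n q (\<lambda>x. (ham_zeros_centered n q x)\<^sup>2) y =
    ((w + a) * (real q - 1) * F (w + a - 1) + (real n - (w + a)) * ((real q - 2) * F (w + a) + F (w + a + 1)))
      / (real n * (real q - 1))"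
    by (rule ham_step_comp_zeros[OF assms(1)]) (simp_all add: w_def a_def F_def ham_zeros_centered_def)
  also have "\<dots> = ((w + a) * (real q - 1) * (w - 1)\<^sup>2 + (real n - (w + a)) * ((real q - 2) * w\<^sup>2 + (w + 1)\<^sup>2))
      / (real n * (real q - 1))"
    by (simp add: F_def algebra_simps)
  also have "(w + a) * (real q - 1) * (w - 1)\<^sup>2 + (real n - (w + a)) * ((real q - 2) * w\<^sup>2 + (w + 1)\<^sup>2)
    = (real n * (real q - 1) - 2 * real q) * w\<^sup>2 + (real q - 2) * w + 2 * a * (real q - 1)"
    unfolding n by (simp add: algebra_simps power2_eq_square)
  also have "\<dots> / (real n * (real q - 1)) = (1 - 2 * real q / (real n * (real q - 1))) * w\<^sup>2
    + (real q - 2) / (real n * (real q - 1)) * w + 2 / real q"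
  proof -
    have "real n * (real q - 1) \<noteq> 0" "real q \<noteq> 0" using assms(2,3) by auto
    then have "(real n * (real q - 1) - 2 * real q) * w\<^sup>2 / (real n * (real q - 1))
        = (1 - 2 * real q / (real n * (real q - 1))) * w\<^sup>2"
      "2 * a * (real q - 1) / (real n * (real q - 1)) = 2 / real q"
      unfolding a_def by (simp_all add: field_simps)
    then show ?thesis by (simp add: add_divide_distrib)
  qed
  finally show ?thesis unfolding w_def .
qed

text \<open>The kernel is symmetric and stochastic, so the uniform distribution is stationary.\<close>
lemma sum_ham_step:
  assumes "0 < n" "2 \<le> q"
  shows "(\<Sum>y\<in>ham_X n q. ham_step n q h y) = (\<Sum>y\<in>ham_X n q. h y)"
proof -
  have "(\<Sum>y\<in>ham_X n q. ham_step n q h y) = (\<Sum>x\<in>ham_X n q. h x * ham_step n q (\<lambda>_. 1) x)"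
    unfolding ham_step_def
    by (subst sum.swap) (simp add: ham_p_sym sum_distrib_left mult.commute)
  also have "\<dots> = (\<Sum>x\<in>ham_X n q. h x)"
    using ham_step_const[OF _ assms] by simp
  finally show ?thesis .
qed

definition ham_expect :: "nat \<Rightarrow> nat \<Rightarrow> nat \<Rightarrow> ((nat \<Rightarrow> nat) \<Rightarrow> real) \<Rightarrow> real" where
  "ham_expect n q k h = (\<Sum>x\<in>ham_X n q. ham_nu n q k x * h x)"

lemma ham_expect_0:
  assumes "0 < q"
  shows "ham_expect n q 0 h = h (ham_x0 n)"
proof -
  have "ham_expect n q 0 h = (\<Sum>x\<in>ham_X n q. if ham_x0 n = x then h x else 0)"
    unfolding ham_expect_def ham_nu_def by (rule sum.cong) auto
  then show ?thesis using ham_x0_in_X[OF assms] by (simp add: finite_ham_X)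
qed

lemma ham_expect_Suc: "ham_expect n q (Suc k) h = ham_expect n q k (ham_step n q h)"
proof -
  have "ham_expect n q (Suc k) h =
    (\<Sum>x\<in>ham_X n q. \<Sum>y\<in>ham_X n q. ham_nu n q k y * ham_p n q y x * h x)"
    unfolding ham_expect_def ham_nu_def by (simp add: sum_distrib_right)
  also have "\<dots> = (\<Sum>y\<in>ham_X n q. \<Sum>x\<in>ham_X n q. ham_nu n q k y * ham_p n q y x * h x)"
    by (rule sum.swap)
  also have "\<dots> = ham_expect n q k (ham_step n q h)"
    unfolding ham_expect_def ham_step_def by (simp add: sum_distrib_left mult.assoc)
  finally show ?thesis .
qed

lemma ham_expect_cong:
  "(\<And>x. x \<in> ham_X n q \<Longrightarrow> h x = g x) \<Longrightarrow> ham_expect n q k h = ham_expect n q k g"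
  unfolding ham_expect_def by (rule sum.cong) auto

lemma ham_expect_add: "ham_expect n q k (\<lambda>x. f x + g x) = ham_expect n q k f + ham_expect n q k g"
  unfolding ham_expect_def by (simp add: sum.distrib distrib_left)

lemma ham_expect_diff: "ham_expect n q k (\<lambda>x. f x - g x) = ham_expect n q k f - ham_expect n q k g"
  unfolding ham_expect_def by (simp add: sum_subtractf right_diff_distrib)

lemma ham_expect_mult_left: "ham_expect n q k (\<lambda>x. c * f x) = c * ham_expect n q k f"
  unfolding ham_expect_def by (simp add: sum_distrib_left mult.left_commute)

lemma ham_nu_nonneg: "1 \<le> q \<Longrightarrow> 0 \<le> ham_nu n q k x"
proof -
  assume "1 \<le> q"
  then have "0 \<le> ham_p n q y x" for y x unfolding ham_p_def by simp
  then have "0 \<le> ham_pk n q k x0 x" for x0 x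
    by (induction k arbitrary: x) (auto intro!: sum_nonneg)
  then show ?thesis unfolding ham_nu_def .
qed

text \<open>The hypothesis on N makes both contraction factors 1 - q/N and 1 - 2q/N nonnegative.\<close>
locale hamming_walk =
  fixes n q :: nat
  assumes q_ge_2: "2 \<le> q" and N_ge: "2 * real q \<le> real n * (real q - 1)"
begin

definition N :: real where "N = real n * (real q - 1)"

lemma n_pos: "0 < n"
  using N_ge q_ge_2 by (cases n) auto

lemma N_pos: "0 < N"
  using N_ge q_ge_2 unfolding N_def by simp

lemma q_le_N: "2 * real q \<le> N"
  using N_ge unfolding N_def .

lemma expect_one: "ham_expect n q k (\<lambda>_. 1) = 1"
proof (induction k)
  case 0
  show ?case using q_ge_2 by (simp add: ham_expect_0)
next
  case (Suc k)
  have "ham_expect n q (Suc k) (\<lambda>_. 1) = ham_expect n q k (\<lambda>_. 1)"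
    unfolding ham_expect_Suc using ham_step_const[OF _ n_pos q_ge_2]
    by (intro ham_expect_cong) simp
  with Suc show ?case by simp
qed

lemma expect_const: "ham_expect n q k (\<lambda>_. c) = c"
  using ham_expect_mult_left[of n q k c "\<lambda>_. 1"] by (simp add: expect_one)

lemma expect_centered_sq:
  "ham_expect n q k (\<lambda>x. (h x - ham_expect n q k h)\<^sup>2)
     = ham_expect n q k (\<lambda>x. (h x)\<^sup>2) - (ham_expect n q k h)\<^sup>2"
proof -
  define e where "e = ham_expect n q k h"
  have "(\<lambda>x. (h x - e)\<^sup>2) = (\<lambda>x. (h x)\<^sup>2 - (2 * e) * h x + e\<^sup>2)"
    by (simp add: fun_eq_iff power2_diff algebra_simps)
  then show ?thesis
    unfolding e_def[symmetric]
    by (simp add: ham_expect_add ham_expect_diff ham_expect_mult_left expect_const power2_eq_square e_def)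
qed

lemma expect_zeros_centered:
  "ham_expect n q k (ham_zeros_centered n q) = (1 - real q / N) ^ k * (N / real q)"
proof (induction k)
  case 0
  have "ham_zeros_centered n q (ham_x0 n) = N / real q"
    using q_ge_2 unfolding ham_zeros_centered_def ham_zeros_def ham_x0_def N_def
    by (simp add: field_simps)
  then show ?case using q_ge_2 by (simp add: ham_expect_0)
next
  case (Suc k)
  have "ham_expect n q (Suc k) (ham_zeros_centered n q)
      = ham_expect n q k (\<lambda>x. (1 - real q / N) * ham_zeros_centered n q x)"
    unfolding ham_expect_Suc using ham_step_zeros_centered[OF _ n_pos q_ge_2, folded N_def]
    by (intro ham_expect_cong) simp
  also have "\<dots> = (1 - real q / N) * ham_expect n q k (ham_zeros_centered n q)"
    by (rule ham_expect_mult_left)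
  finally show ?case using Suc by simp
qed

lemma expect_zeros_centered_sq_Suc:
  "ham_expect n q (Suc k) (\<lambda>x. (ham_zeros_centered n q x)\<^sup>2)
     = (1 - 2 * real q / N) * ham_expect n q k (\<lambda>x. (ham_zeros_centered n q x)\<^sup>2)
       + (real q - 2) / N * ham_expect n q k (ham_zeros_centered n q) + 2 / real q"
proof -
  have "ham_expect n q (Suc k) (\<lambda>x. (ham_zeros_centered n q x)\<^sup>2)
      = ham_expect n q k (\<lambda>x. (1 - 2 * real q / N) * (ham_zeros_centered n q x)\<^sup>2
          + (real q - 2) / N * ham_zeros_centered n q x + 2 / real q)"
    unfolding ham_expect_Suc using ham_step_zeros_centered_sq[OF _ n_pos q_ge_2, folded N_def]
    by (intro ham_expect_cong) simp
  then show ?thesis by (simp only: ham_expect_add ham_expect_mult_left expect_const)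
qed

text \<open>N/(2q) is the fixed point of the affine recursion satisfied by the variance bound.\<close>
lemma variance_zeros_centered_le:
  "ham_expect n q k (\<lambda>x. (ham_zeros_centered n q x)\<^sup>2)
     - (ham_expect n q k (ham_zeros_centered n q))\<^sup>2 \<le> N / (2 * real q)"
proof (induction k)
  case 0
  show ?case using q_ge_2 N_pos by (simp add: ham_expect_0)
next
  case (Suc k)
  define l where "l = 1 - real q / N"
  define m where "m = 1 - 2 * real q / N"
  define s where "s = ham_expect n q k (\<lambda>x. (ham_zeros_centered n q x)\<^sup>2)"
  define w where "w = ham_expect n q k (ham_zeros_centered n q)"
  define B where "B = N / (2 * real q)"
  have l: "0 \<le> l" "l \<le> 1" and "0 \<le> m"
    using q_le_N N_pos q_ge_2 unfolding l_def m_def by (auto simp: field_simps)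
  moreover have "l\<^sup>2 = m + (real q / N)\<^sup>2"
    unfolding l_def m_def by (simp add: power2_diff)
  ultimately have m: "0 \<le> m" "m \<le> l\<^sup>2" by auto
  have w: "0 \<le> w" "w \<le> N / real q"
    using l N_pos mult_right_mono[OF power_le_one[OF l], of "N / real q" k]
    unfolding w_def l_def expect_zeros_centered by auto
  have "m * s \<le> l\<^sup>2 * w\<^sup>2 + m * B"
    using mult_left_mono[OF Suc.IH[folded s_def w_def B_def] m(1)] mult_right_mono[OF m(2), of "w\<^sup>2"]
    by (simp add: algebra_simps)
  moreover have "(real q - 2) / N * w \<le> (real q - 2) / N * (N / real q)"
    using q_ge_2 N_pos by (intro mult_left_mono w) auto
  moreover have "(real q - 2) / N * (N / real q) + 2 / real q + m * B = B"
    using N_pos q_ge_2 unfolding m_def B_def by (simp add: field_simps)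
  moreover have "ham_expect n q (Suc k) (ham_zeros_centered n q) = l * w"
    unfolding w_def l_def expect_zeros_centered by simp
  ultimately show ?case
    unfolding expect_zeros_centered_sq_Suc s_def[symmetric] w_def[symmetric] m_def[symmetric] B_def[symmetric]
    by (simp add: power_mult_distrib)
qed

lemma sum_zeros_centered: "(\<Sum>x\<in>ham_X n q. ham_zeros_centered n q x) = 0"
proof -
  have "(\<Sum>x\<in>ham_X n q. ham_zeros_centered n q x)
      = (\<Sum>x\<in>ham_X n q. ham_step n q (ham_zeros_centered n q) x)"
    using sum_ham_step[OF n_pos q_ge_2] by simp
  also have "\<dots> = (1 - real q / N) * (\<Sum>x\<in>ham_X n q. ham_zeros_centered n q x)"
    using ham_step_zeros_centered[OF _ n_pos q_ge_2, folded N_def] by (simp add: sum_distrib_left)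
  finally show ?thesis
    using N_pos q_ge_2 by (simp add: algebra_simps)
qed

lemma sum_zeros_centered_sq:
  "(\<Sum>x\<in>ham_X n q. (ham_zeros_centered n q x)\<^sup>2) = real (card (ham_X n q)) * N / (real q)\<^sup>2"
proof -
  define S where "S = (\<Sum>x\<in>ham_X n q. (ham_zeros_centered n q x)\<^sup>2)"
  have "S = (\<Sum>x\<in>ham_X n q. ham_step n q (\<lambda>x. (ham_zeros_centered n q x)\<^sup>2) x)"
    unfolding S_def using sum_ham_step[OF n_pos q_ge_2] by simp
  also have "\<dots> = (1 - 2 * real q / N) * S + (real q - 2) / N * (\<Sum>x\<in>ham_X n q. ham_zeros_centered n q x)
      + real (card (ham_X n q)) * (2 / real q)"
    using ham_step_zeros_centered_sq[OF _ n_pos q_ge_2, folded N_def]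
    by (simp add: S_def sum.distrib sum_distrib_left)
  finally have "2 * real q / N * S = real (card (ham_X n q)) * (2 / real q)"
    unfolding sum_zeros_centered by (simp add: algebra_simps)
  then show ?thesis
    using N_pos q_ge_2 unfolding S_def by (simp add: field_simps power2_eq_square)
qed

lemma tv_dist_lower_bound:
  "1 - 2 * (real q + 2) / (N * (1 - real q / N) ^ (2 * k))
     \<le> tv_dist (ham_X n q) (ham_nu n q k) (ham_pi n q)"
proof -
  define L where "L = (1 - real q / N) ^ k"
  define w where "w = ham_expect n q k (ham_zeros_centered n q)"
  have L: "0 < L" unfolding L_def using q_le_N N_pos q_ge_2 by (simp add: field_simps)
  have w: "w = L * (N / real q)" unfolding w_def L_def by (rule expect_zeros_centered)
  have "0 < w" unfolding w using L N_pos q_ge_2 by simp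
  have \<nu>: "\<And>x. 0 \<le> ham_nu n q k x" "sum (ham_nu n q k) (ham_X n q) = 1"
    using ham_nu_nonneg[of q n k] q_ge_2 expect_one[of k] unfolding ham_expect_def by auto
  have "0 < card (ham_X n q)"
    using ham_x0_in_X[of q n] q_ge_2 finite_ham_X by (auto simp: card_gt_0_iff)
  then have \<pi>: "(\<Sum>x\<in>ham_X n q. ham_pi n q x * (ham_zeros_centered n q x)\<^sup>2) = N / (real q)\<^sup>2"
    unfolding ham_pi_def by (simp add: sum_divide_distrib[symmetric] sum_zeros_centered_sq)
  have var: "(\<Sum>x\<in>ham_X n q. ham_nu n q k x * (ham_zeros_centered n q x - w)\<^sup>2) \<le> N / (2 * real q)"
    using variance_zeros_centered_le[of k] expect_centered_sq[of k "ham_zeros_centered n q"]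
    unfolding w_def ham_expect_def by simp
  have "1 - 4 * ((\<Sum>x\<in>ham_X n q. ham_nu n q k x * (ham_zeros_centered n q x - w)\<^sup>2) + N / (real q)\<^sup>2) / w\<^sup>2
      \<le> tv_dist (ham_X n q) (ham_nu n q k) (ham_pi n q)"
    using tv_dist_ge_second_moment[OF finite_ham_X \<nu> _ \<open>0 < w\<close>, of "ham_pi n q" "ham_zeros_centered n q"]
    unfolding \<pi> by (simp add: ham_pi_def)
  moreover have "4 * ((\<Sum>x\<in>ham_X n q. ham_nu n q k x * (ham_zeros_centered n q x - w)\<^sup>2) + N / (real q)\<^sup>2) / w\<^sup>2
      \<le> 4 * (N / (2 * real q) + N / (real q)\<^sup>2) / w\<^sup>2"
    using var by (intro divide_right_mono mult_left_mono) auto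
  moreover have "4 * (N / (2 * real q) + N / (real q)\<^sup>2) / w\<^sup>2 = 2 * (real q + 2) / (N * L\<^sup>2)"
    unfolding w using N_pos L q_ge_2 by (simp add: field_simps power2_eq_square)
  ultimately show ?thesis
    unfolding L_def power_even_eq by linarith
qed

lemma tv_dist_ge_exp:
  assumes k: "real k = N / (2 * real q) * (ln N - c)" and c: "0 \<le> c" "c \<le> ln N"
  shows "1 - 2 * (real q + 2) * exp (2 * real q * ln N / N) * exp (- c)
    \<le> tv_dist (ham_X n q) (ham_nu n q k) (ham_pi n q)"
proof -
  have kx: "real (2 * k) * (real q / N) = ln N - c"
    using k q_ge_2 N_pos by (simp add: field_simps)
  have x: "0 \<le> real q / N" "real q / N \<le> 1 / 2"
    using q_le_N N_pos by (auto simp: field_simps)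
  note bound = exp_le_mult_one_minus_power[OF x kx c N_pos]
  have "2 * (real q + 2) / (N * (1 - real q / N) ^ (2 * k))
      \<le> 2 * (real q + 2) / exp (c - 2 * (real q / N) * ln N)"
    using bound order_less_le_trans[OF exp_gt_zero bound] by (intro divide_left_mono) auto
  also have "\<dots> = 2 * (real q + 2) * exp (2 * real q * ln N / N) * exp (- c)"
    by (simp add: exp_diff exp_minus field_simps)
  finally show ?thesis
    using tv_dist_lower_bound[of k] by linarith
qed

lemma tv_dist_ge_cutoff:
  assumes k: "real k = N / (2 * real q) * (ln N - c)" and c: "0 \<le> c" "c \<le> ln N"
    and b: "0 < b" and small: "2 * real q * ln N / N \<le> ln (1 + b / (4 * real q))"
  shows "1 - (4 * real q + b) * exp (- c) \<le> tv_dist (ham_X n q) (ham_nu n q k) (ham_pi n q)"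
proof -
  have "exp (2 * real q * ln N / N) \<le> exp (ln (1 + b / (4 * real q)))"
    using small by simp
  also have "\<dots> = 1 + b / (4 * real q)"
    using b q_ge_2 by (intro exp_ln add_pos_pos divide_pos_pos) auto
  finally have "2 * (real q + 2) * exp (2 * real q * ln N / N) \<le> 2 * (real q + 2) * (1 + b / (4 * real q))"
    by (rule mult_left_mono) simp
  also have "\<dots> = 2 * (real q + 2) + b * ((real q + 2) / (2 * real q))"
    using q_ge_2 by (simp add: field_simps)
  also have "\<dots> \<le> 4 * real q + b"
    using q_ge_2 b mult_left_le[of "(real q + 2) / (2 * real q)" b] by simp
  finally have "2 * (real q + 2) * exp (2 * real q * ln N / N) * exp (- c) \<le> (4 * real q + b) * exp (- c)"
    by (rule mult_right_mono) simp
  with tv_dist_ge_exp[OF k c] show ?thesis by linarith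
qed

end

lemma hamming_walk_if_ge_4: "2 \<le> q \<Longrightarrow> 4 \<le> n \<Longrightarrow> hamming_walk n q"
proof unfold_locales
  assume "2 \<le> q" "4 \<le> n"
  then have "4 * (real q - 1) \<le> real n * (real q - 1)"
    by (intro mult_right_mono) auto
  with \<open>2 \<le> q\<close> show "2 * real q \<le> real n * (real q - 1)" by simp
qed

theorem theorem1p3:
  fixes q :: nat and c0 b :: real
  assumes "q \<ge> 2" and "c0 > 0" and "b > 0"
  shows "\<exists>n0::nat. n0 > 0 \<and>
    (\<forall>n::nat. \<forall>k::int. \<forall>c::real. n \<ge> n0 \<longrightarrow>
       real_of_int k = real n * (real q - 1) / (2 * real q) * (ln (real n * (real q - 1)) - c) \<longrightarrow>
       0 \<le> c \<longrightarrow> c \<le> min c0 (ln (real n * (real q - 1))) \<longrightarrow>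
       tv_dist (ham_X n q) (ham_nu n q (nat k)) (ham_pi n q) \<ge> 1 - (4 * real q + b) * exp (- c))"
proof -
  have "0 < ln (1 + b / (4 * real q))"
    using assms by (intro ln_gt_zero) simp
  then obtain n1 where n1: "\<And>n. n \<ge> n1 \<Longrightarrow> 2 * real q * ln (real n * (real q - 1)) / (real n * (real q - 1))
      \<le> ln (1 + b / (4 * real q))"
    using eventually_ln_over_linear_le[of "real q - 1" "ln (1 + b / (4 * real q))" "2 * real q"] assms(1)
    unfolding eventually_sequentially by auto
  show ?thesis
  proof (intro exI[of _ "max 4 n1"] conjI allI impI)
    fix n :: nat and k :: int and c :: real
    assume n: "max 4 n1 \<le> n"
      and k: "real_of_int k = real n * (real q - 1) / (2 * real q) * (ln (real n * (real q - 1)) - c)"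
      and c: "0 \<le> c" "c \<le> min c0 (ln (real n * (real q - 1)))"
    interpret hamming_walk n q
      using hamming_walk_if_ge_4 assms(1) n by simp
    have N: "real n * (real q - 1) = N" unfolding N_def ..
    have "c \<le> ln N" using c(2) unfolding N by simp
    then have "0 \<le> real_of_int k"
      using k N_pos unfolding N by simp
    then have "real (nat k) = N / (2 * real q) * (ln N - c)"
      using k unfolding N by simp
    moreover note \<open>c \<le> ln N\<close>
    moreover have "2 * real q * ln N / N \<le> ln (1 + b / (4 * real q))"
      using n1[of n] n unfolding N by simp
    ultimately show "1 - (4 * real q + b) * exp (- c) \<le> tv_dist (ham_X n q) (ham_nu n q (nat k)) (ham_pi n q)"
      using tv_dist_ge_cutoff c(1) assms(3) by blast
  qed simp
qed

end
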